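(* Let $G=(V,E)$ be connected with $n\ge 3$ vertices. For every $u\in V_{\ge2}$, $$(n-1)(n-2)\,\mathrm{bc}(u)=\sum_{s\in V_{\ge2}\setminus\{u\}}\big(1+\mathrm{deg}_1(s)\big)\big(\tilde\delta_s(u)+\zeta_s(u)\big)+\mathrm{deg}_1(u)\big(2n-3-\mathrm{deg}_1(u)\big).$$
   Context: Graphs are finite, simple, undirected, unweighted. $\sigma_{st}$ = number of shortest $s$–$t$ paths, $\sigma_{st}(v)$ = number of those through $v\notin\{s,t\}$; $\mathrm{bc}(v)=\frac{1}{(n-1)(n-2)}\sum_{s\ne t,\ s,t\ne v}\sigma_{st}(v)/\sigma_{st}$ in $G$ (ordered pairs). $V_1$ = degree-1 vertices of $G$, $V_{\ge2}=V\setminus V_1$, $\tilde G$ = subgraph induced by $V_{\ge2}$ with counts $\tilde\sigma$. $\mathrm{deg}_1(t)$ = number of neighbors of $t$ in $G$ of degree 1. For $s,u\in V_{\ge2}$: $\tilde\delta_s(u)=\sum_{t\in V_{\ge2},t\ne s,u}\tilde\sigma_{st}(u)/\tilde\sigma_{st}$, $\zeta_s(u)=\sum_{t\in V_{\ge2},t\ne s,u}\mathrm{deg}_1(t)\tilde\sigma_{st}(u)/\tilde\sigma_{st}$. *)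

theory Defs
  imports Complex_Main
begin

definition simple_graph :: "'a set \<Rightarrow> ('a \<Rightarrow> 'a \<Rightarrow> bool) \<Rightarrow> bool" where
  "simple_graph V E \<longleftrightarrow> finite V \<and> (\<forall>x y. E x y \<longrightarrow> x \<in> V \<and> y \<in> V)
     \<and> (\<forall>x y. E x y \<longrightarrow> E y x) \<and> (\<forall>x. \<not> E x x)"

definition walk :: "'a set \<Rightarrow> ('a \<Rightarrow> 'a \<Rightarrow> bool) \<Rightarrow> 'a list \<Rightarrow> bool" where
  "walk W E xs \<longleftrightarrow> xs \<noteq> [] \<and> set xs \<subseteq> W \<and>
     (\<forall>i. Suc i < length xs \<longrightarrow> E (xs ! i) (xs ! Suc i))"

definition walks_between :: "'a set \<Rightarrow> ('a \<Rightarrow> 'a \<Rightarrow> bool) \<Rightarrow> 'a \<Rightarrow> 'a \<Rightarrow> 'a list set" where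
  "walks_between W E s t = {xs. walk W E xs \<and> hd xs = s \<and> last xs = t}"

definition connected_graph :: "'a set \<Rightarrow> ('a \<Rightarrow> 'a \<Rightarrow> bool) \<Rightarrow> bool" where
  "connected_graph V E \<longleftrightarrow> (\<forall>s\<in>V. \<forall>t\<in>V. walks_between V E s t \<noteq> {})"

text \<open>Shortest s-t paths (walks of minimum length; these are automatically paths).\<close>

definition shortest_paths :: "'a set \<Rightarrow> ('a \<Rightarrow> 'a \<Rightarrow> bool) \<Rightarrow> 'a \<Rightarrow> 'a \<Rightarrow> 'a list set" where
  "shortest_paths W E s t = {xs \<in> walks_between W E s t.
      \<forall>ys \<in> walks_between W E s t. length xs \<le> length ys}"

definition sigma :: "'a set \<Rightarrow> ('a \<Rightarrow> 'a \<Rightarrow> bool) \<Rightarrow> 'a \<Rightarrow> 'a \<Rightarrow> nat" where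
  "sigma W E s t = card (shortest_paths W E s t)"

definition sigma_via :: "'a set \<Rightarrow> ('a \<Rightarrow> 'a \<Rightarrow> bool) \<Rightarrow> 'a \<Rightarrow> 'a \<Rightarrow> 'a \<Rightarrow> nat" where
  "sigma_via W E s t v = card {p \<in> shortest_paths W E s t. v \<in> set p}"

definition betweenness :: "'a set \<Rightarrow> ('a \<Rightarrow> 'a \<Rightarrow> bool) \<Rightarrow> 'a \<Rightarrow> real" where
  "betweenness V E v = (1 / (real (card V - 1) * real (card V - 2))) *
     (\<Sum>(s,t) \<in> {(s,t). s \<in> V \<and> t \<in> V \<and> s \<noteq> t \<and> s \<noteq> v \<and> t \<noteq> v}.
        real (sigma_via V E s t v) / real (sigma V E s t))"

definition degree :: "'a set \<Rightarrow> ('a \<Rightarrow> 'a \<Rightarrow> bool) \<Rightarrow> 'a \<Rightarrow> nat" where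
  "degree V E v = card {w \<in> V. E v w}"

definition V1 :: "'a set \<Rightarrow> ('a \<Rightarrow> 'a \<Rightarrow> bool) \<Rightarrow> 'a set" where
  "V1 V E = {v \<in> V. degree V E v = 1}"

definition Vge2 :: "'a set \<Rightarrow> ('a \<Rightarrow> 'a \<Rightarrow> bool) \<Rightarrow> 'a set" where
  "Vge2 V E = V - V1 V E"

definition deg1 :: "'a set \<Rightarrow> ('a \<Rightarrow> 'a \<Rightarrow> bool) \<Rightarrow> 'a \<Rightarrow> nat" where
  "deg1 V E t = card {w \<in> V. E t w \<and> degree V E w = 1}"

definition delta_tilde :: "'a set \<Rightarrow> ('a \<Rightarrow> 'a \<Rightarrow> bool) \<Rightarrow> 'a \<Rightarrow> 'a \<Rightarrow> real" where
  "delta_tilde V E s u = (\<Sum>t \<in> Vge2 V E - {s, u}.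
     real (sigma_via (Vge2 V E) E s t u) / real (sigma (Vge2 V E) E s t))"

definition zeta :: "'a set \<Rightarrow> ('a \<Rightarrow> 'a \<Rightarrow> bool) \<Rightarrow> 'a \<Rightarrow> 'a \<Rightarrow> real" where
  "zeta V E s u = (\<Sum>t \<in> Vge2 V E - {s, u}. real (deg1 V E t) *
     real (sigma_via (Vge2 V E) E s t u) / real (sigma (Vge2 V E) E s t))"

end

theory Submission
  imports Defs
begin

text \<open>A pendant vertex never lies in the interior of a shortest path, and a shortest path
starting at a pendant vertex x is x followed by a shortest path from its unique neighbour.
So if the anchor of x is that neighbour (and every non-pendant vertex is its own anchor),
the pair dependency sigma_st(u) / sigma_st only depends on the anchors of s and t, and
between non-pendant vertices the shortest paths of G are those of the induced subgraph.
Grouping the pairs (s, t) by their anchors, a non-pendant vertex a other than u anchors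
1 + deg1(a) vertices; this produces the factor 1 + deg1(s), and the factor 1 + deg1(t)
turns the inner sum into delta_s(u) + zeta_s(u). The pairs with an endpoint among the
deg1(u) pendant neighbours of u have dependency 1 and give the correction term.\<close>

definition pair_dependency :: "'a set \<Rightarrow> ('a \<Rightarrow> 'a \<Rightarrow> bool) \<Rightarrow> 'a \<Rightarrow> 'a \<Rightarrow> 'a \<Rightarrow> real" where
  "pair_dependency W E v s t = real (sigma_via W E s t v) / real (sigma W E s t)"

lemma walk_iff_successively:
  "walk W E xs \<longleftrightarrow> xs \<noteq> [] \<and> set xs \<subseteq> W \<and> successively E xs"
  unfolding walk_def successively_conv_nth by blast

lemma walk_in_closed_set:
  assumes "successively E xs" "xs \<noteq> []" "hd xs \<in> C" "\<And>a b. a \<in> C \<Longrightarrow> E a b \<Longrightarrow> b \<in> C"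
  shows "set xs \<subseteq> C"
  using assms
proof (induction xs)
  case (Cons a xs)
  then show ?case by (cases xs) (auto simp: successively_Cons)
qed simp

subsection \<open>Shortest paths\<close>

lemma shortest_paths_nonempty:
  assumes "walks_between W E s t \<noteq> {}"
  shows "shortest_paths W E s t \<noteq> {}"
proof -
  let ?A = "walks_between W E s t"
  obtain xs where xs: "xs \<in> ?A" "length xs = (LEAST k. \<exists>ys\<in>?A. length ys = k)"
    using assms LeastI_ex[of "\<lambda>k. \<exists>ys\<in>?A. length ys = k"] by blast
  then have "\<forall>ys\<in>?A. length xs \<le> length ys"
    by (auto intro: Least_le)
  with xs show ?thesis unfolding shortest_paths_def by auto
qed

lemma finite_shortest_paths:
  assumes "finite W"
  shows "finite (shortest_paths W E s t)"
proof (cases "shortest_paths W E s t = {}")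
  case False
  then obtain xs where xs: "xs \<in> shortest_paths W E s t" by auto
  have "shortest_paths W E s t \<subseteq> {ys. set ys \<subseteq> W \<and> length ys \<le> length xs}"
    using xs unfolding shortest_paths_def walks_between_def walk_def by auto
  then show ?thesis using finite_lists_length_le[OF assms] by (rule finite_subset)
qed simp

lemma sigma_pos:
  assumes "finite W" "walks_between W E s t \<noteq> {}"
  shows "sigma W E s t > 0"
  using shortest_paths_nonempty[OF assms(2)] finite_shortest_paths[OF assms(1)]
  unfolding sigma_def by (simp add: card_gt_0_iff)

lemma sigma_via_source: "sigma_via W E s t s = sigma W E s t"
proof -
  have "{p \<in> shortest_paths W E s t. s \<in> set p} = shortest_paths W E s t"
    by (auto simp: shortest_paths_def walks_between_def walk_def)
  then show ?thesis by (simp add: sigma_via_def sigma_def)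
qed

lemma pair_dependency_source:
  assumes "finite W" "walks_between W E s t \<noteq> {}"
  shows "pair_dependency W E s s t = 1"
  using sigma_pos[OF assms] by (simp add: pair_dependency_def sigma_via_source)

lemma pair_dependency_loop:
  assumes "s \<in> W" "v \<noteq> s"
  shows "pair_dependency W E v s s = 0"
proof -
  have trivial: "[s] \<in> walks_between W E s s"
    using assms by (auto simp: walks_between_def walk_def)
  have "p = [s]" if "p \<in> shortest_paths W E s s" for p
  proof -
    from that have "\<forall>ys\<in>walks_between W E s s. length p \<le> length ys" "p \<noteq> []" "hd p = s"
      by (auto simp: shortest_paths_def walks_between_def walk_def)
    with trivial have "length p \<le> 1" "p \<noteq> []" "hd p = s" by auto
    then show ?thesis by (cases p) auto
  qed
  then have "{p \<in> shortest_paths W E s s. v \<in> set p} = {}" using assms by fastforce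
  then have "sigma_via W E s s v = 0"
    unfolding sigma_via_def by (simp only: card.empty)
  then show ?thesis by (simp add: pair_dependency_def)
qed

lemma shortest_paths_commute:
  assumes "\<And>x y. E x y \<Longrightarrow> E y x"
  shows "shortest_paths W E s t = rev ` shortest_paths W E t s"
proof -
  have "successively (\<lambda>x y. E y x) xs = successively E xs" for xs
    by (rule successively_cong) (use assms in auto)
  then have walks: "xs \<in> walks_between W E s t \<longleftrightarrow> rev xs \<in> walks_between W E t s" for xs s t
    by (auto simp: walks_between_def walk_iff_successively hd_rev last_rev)
  have "xs \<in> shortest_paths W E s t \<Longrightarrow> rev xs \<in> shortest_paths W E t s" for xs s t
    unfolding shortest_paths_def using walks[of "rev ys" for ys] walks by force
  then show ?thesis by (auto intro!: image_eqI[where x="rev xs" for xs])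
qed

lemma pair_dependency_commute:
  assumes "\<And>x y. E x y \<Longrightarrow> E y x"
  shows "pair_dependency W E v s t = pair_dependency W E v t s"
proof -
  have paths: "shortest_paths W E s t = rev ` shortest_paths W E t s"
    by (rule shortest_paths_commute[OF assms])
  then have "{p \<in> shortest_paths W E s t. v \<in> set p} = rev ` {p \<in> shortest_paths W E t s. v \<in> set p}"
    by auto
  then show ?thesis
    by (simp add: pair_dependency_def sigma_via_def sigma_def card_image paths)
qed

lemma walks_between_pendant:
  assumes nbr: "\<And>w. E x w \<longleftrightarrow> w = p" and "x \<in> W" "t \<noteq> x"
  shows "walks_between W E x t = Cons x ` walks_between W E p t"
proof
  show "walks_between W E x t \<subseteq> Cons x ` walks_between W E p t"
  proof
    fix xs assume "xs \<in> walks_between W E x t"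
    then have w: "xs \<noteq> []" "set xs \<subseteq> W" "successively E xs" "hd xs = x" "last xs = t"
      by (auto simp: walks_between_def walk_iff_successively)
    then obtain ys where xs: "xs = x # ys"
      by (cases xs) auto
    with w \<open>t \<noteq> x\<close> have "ys \<noteq> []" by auto
    with w xs nbr have "hd ys = p" by (cases ys) (auto simp: successively_Cons)
    with w xs \<open>ys \<noteq> []\<close> have "ys \<in> walks_between W E p t"
      by (auto simp: walks_between_def walk_iff_successively successively_Cons)
    then show "xs \<in> Cons x ` walks_between W E p t" using xs by auto
  qed
next
  show "Cons x ` walks_between W E p t \<subseteq> walks_between W E x t"
    using assms by (auto simp: walks_between_def walk_iff_successively successively_Cons)
qed

lemma pair_dependency_pendant:
  assumes "\<And>w. E x w \<longleftrightarrow> w = p" and "x \<in> W" "t \<noteq> x" "v \<noteq> x"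
  shows "pair_dependency W E v x t = pair_dependency W E v p t"
proof -
  have "walks_between W E x t = Cons x ` walks_between W E p t"
    using assms(1-3) by (rule walks_between_pendant)
  then have paths: "shortest_paths W E x t = Cons x ` shortest_paths W E p t"
    unfolding shortest_paths_def by auto
  then have "{q \<in> shortest_paths W E x t. v \<in> set q} = Cons x ` {q \<in> shortest_paths W E p t. v \<in> set q}"
    using \<open>v \<noteq> x\<close> by auto
  then show ?thesis
    by (simp add: pair_dependency_def sigma_via_def sigma_def paths card_image)
qed

lemma pendant_not_inner_on_shortest_path:
  assumes sym: "\<And>x y. E x y \<Longrightarrow> E y x"
    and xs: "xs \<in> shortest_paths W E s t" and "z \<in> set xs"
    and nbr: "\<And>w. E z w \<longleftrightarrow> w = p"
  shows "z = s \<or> z = t"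
proof (rule ccontr)
  assume inner: "\<not> (z = s \<or> z = t)"
  from xs have w: "xs \<noteq> []" "set xs \<subseteq> W" "successively E xs" "hd xs = s" "last xs = t"
    and shortest: "\<And>ys. ys \<in> walks_between W E s t \<Longrightarrow> length xs \<le> length ys"
    by (auto simp: shortest_paths_def walks_between_def walk_iff_successively)
  from \<open>z \<in> set xs\<close> obtain A B where AB: "xs = A @ z # B" by (meson split_list)
  obtain A' a where A: "A = A' @ [a]"
    using AB w inner by (cases A rule: rev_cases) auto
  obtain b B' where B: "B = b # B'"
    using AB w inner by (cases B) auto
  have "E a z" "E z b" using w(3) unfolding AB A B
    by (auto simp: successively_append_iff successively_Cons)
  then have "a = p" "b = p" using nbr sym by blast+
  \<comment> \<open>the detour a z b = p z p can be cut to p\<close>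
  then have "A' @ a # B' \<in> walks_between W E s t"
    using w unfolding AB A B walks_between_def walk_iff_successively
    by (auto simp: successively_append_iff successively_Cons hd_append split: if_splits)
  from shortest[OF this] show False unfolding AB A B by simp
qed

lemma shortest_paths_restrict:
  assumes "W' \<subseteq> W" and "walks_between W E s t \<noteq> {}"
    and inside: "\<And>xs. xs \<in> shortest_paths W E s t \<Longrightarrow> set xs \<subseteq> W'"
  shows "shortest_paths W E s t = shortest_paths W' E s t"
proof -
  have sub: "walks_between W' E s t \<subseteq> walks_between W E s t"
    using assms(1) by (auto simp: walks_between_def walk_def)
  have walk': "xs \<in> walks_between W' E s t" if "xs \<in> shortest_paths W E s t" for xs
    using that inside[OF that] by (auto simp: shortest_paths_def walks_between_def walk_def)
  obtain y where y: "y \<in> shortest_paths W E s t"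
    using shortest_paths_nonempty[OF assms(2)] by auto
  show ?thesis
  proof (intro equalityI subsetI)
    fix x assume "x \<in> shortest_paths W E s t"
    then show "x \<in> shortest_paths W' E s t"
      using walk' sub by (auto simp: shortest_paths_def)
  next
    fix x assume "x \<in> shortest_paths W' E s t"
    then have "x \<in> walks_between W E s t" "length x \<le> length y"
      using walk'[OF y] sub by (auto simp: shortest_paths_def)
    then show "x \<in> shortest_paths W E s t"
      using y by (force simp: shortest_paths_def)
  qed
qed

subsection \<open>Pendant vertices and their anchors\<close>

locale connected_simple_graph =
  fixes V :: "'a set" and E :: "'a \<Rightarrow> 'a \<Rightarrow> bool"
  assumes simple: "simple_graph V E" and connected: "connected_graph V E"
begin

lemma finite_vertices: "finite V"
  and adj_sym: "E x y \<Longrightarrow> E y x"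
  and adj_in_vertices: "E x y \<Longrightarrow> x \<in> V \<and> y \<in> V"
  and adj_irrefl: "\<not> E x x"
  using simple by (simp_all add: simple_graph_def)

lemma walks_between_nonempty: "s \<in> V \<Longrightarrow> t \<in> V \<Longrightarrow> walks_between V E s t \<noteq> {}"
  using connected by (simp add: connected_graph_def)

lemma Vge2_subset: "Vge2 V E \<subseteq> V"
  by (auto simp: Vge2_def)

definition pendant_nbr :: "'a \<Rightarrow> 'a" where
  "pendant_nbr x = (THE p. \<forall>w. E x w \<longleftrightarrow> w = p)"

lemma adj_pendant_iff:
  assumes "x \<in> V1 V E"
  shows "E x w \<longleftrightarrow> w = pendant_nbr x"
proof -
  from assms have "card {w \<in> V. E x w} = 1" by (simp add: V1_def degree_def)
  then obtain p where "{w \<in> V. E x w} = {p}" by (rule card_1_singletonE)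
  then have p: "\<forall>w. E x w \<longleftrightarrow> w = p" using adj_in_vertices by blast
  then have "pendant_nbr x = p" unfolding pendant_nbr_def by (rule the_equality) (use p in blast)
  with p show ?thesis by simp
qed

lemma pendant_nbr_in_Vge2:
  assumes "card V \<ge> 3" and x: "x \<in> V1 V E"
  shows "pendant_nbr x \<in> Vge2 V E"
proof (rule ccontr)
  let ?p = "pendant_nbr x"
  have "E x ?p" using adj_pendant_iff[OF x] by simp
  then have xV: "x \<in> V" and pV: "?p \<in> V" and px: "E ?p x" using adj_in_vertices adj_sym by auto
  assume "?p \<notin> Vge2 V E"
  then have p_pendant: "?p \<in> V1 V E" using pV by (auto simp: Vge2_def)
  have p_nbr: "E ?p w \<longleftrightarrow> w = x" for w
    using adj_pendant_iff[OF p_pendant, of w] adj_pendant_iff[OF p_pendant, of x] px by simp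
  \<comment> \<open>the edge x p would be a whole connected component\<close>
  have "card {x, ?p} \<le> 2" by (simp add: card_insert_le_m1)
  then have "\<not> V \<subseteq> {x, ?p}" using assms(1) card_mono[of "{x, ?p}" V] by auto
  then obtain z where z: "z \<in> V" "z \<notin> {x, ?p}" by auto
  from walks_between_nonempty[OF xV z(1)] obtain xs where "xs \<in> walks_between V E x z" by auto
  then have xs: "successively E xs" "xs \<noteq> []" "hd xs = x" "last xs = z"
    by (auto simp: walks_between_def walk_iff_successively)
  have "set xs \<subseteq> {x, ?p}"
    by (rule walk_in_closed_set[OF xs(1,2)]) (use xs(3) adj_pendant_iff[OF x] p_nbr in auto)
  then show False using xs z last_in_set[OF xs(2)] by auto
qed

lemma shortest_paths_Vge2:
  assumes "s \<in> Vge2 V E" "t \<in> Vge2 V E"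
  shows "shortest_paths V E s t = shortest_paths (Vge2 V E) E s t"
proof (rule shortest_paths_restrict[OF Vge2_subset walks_between_nonempty])
  show "s \<in> V" "t \<in> V" using assms Vge2_subset by auto
  fix xs assume xs: "xs \<in> shortest_paths V E s t"
  show "set xs \<subseteq> Vge2 V E"
  proof
    fix z assume z: "z \<in> set xs"
    then have "z \<in> V" using xs by (auto simp: shortest_paths_def walks_between_def walk_def)
    show "z \<in> Vge2 V E"
    proof (rule ccontr)
      assume "z \<notin> Vge2 V E"
      then have "z \<in> V1 V E" using \<open>z \<in> V\<close> by (auto simp: Vge2_def)
      with pendant_not_inner_on_shortest_path[OF adj_sym xs z] adj_pendant_iff assms
      show False by (auto simp: Vge2_def)
    qed
  qed
qed

definition anchor :: "'a \<Rightarrow> 'a" where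
  "anchor x = (if x \<in> V1 V E then pendant_nbr x else x)"

lemma anchor_in_Vge2: "card V \<ge> 3 \<Longrightarrow> x \<in> V \<Longrightarrow> anchor x \<in> Vge2 V E"
  using pendant_nbr_in_Vge2 by (auto simp: anchor_def Vge2_def)

lemma anchor_Vge2: "x \<in> Vge2 V E \<Longrightarrow> anchor x = x"
  by (auto simp: anchor_def Vge2_def)

lemma pair_dependency_anchor_left:
  assumes "x \<in> V" "t \<noteq> x" "v \<noteq> x"
  shows "pair_dependency V E v x t = pair_dependency V E v (anchor x) t"
proof (cases "x \<in> V1 V E")
  case True
  have "pair_dependency V E v x t = pair_dependency V E v (pendant_nbr x) t"
    using adj_pendant_iff[OF True] assms by (rule pair_dependency_pendant)
  then show ?thesis using True by (simp add: anchor_def)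
qed (simp add: anchor_def)

lemma pair_dependency_anchor:
  assumes "s \<in> V" "t \<in> V" "v \<in> V" "s \<noteq> t" "v \<noteq> s" "v \<noteq> t"
  shows "pair_dependency V E v s t = pair_dependency V E v (anchor s) (anchor t)"
proof (cases "anchor s = t")
  case True
  have "card {s, t, v} \<le> card V"
    using assms(1-3) finite_vertices by (intro card_mono) auto
  then have "card V \<ge> 3" using assms(4-6) by simp
  then have "anchor t = t" using True anchor_in_Vge2[OF _ assms(1)] anchor_Vge2 by metis
  then show ?thesis
    using pair_dependency_anchor_left[OF assms(1) assms(4)[symmetric] assms(5)] True by simp
next
  case False
  have "pair_dependency V E v s t = pair_dependency V E v t (anchor s)"
    using pair_dependency_anchor_left[OF assms(1) assms(4)[symmetric] assms(5)]
      pair_dependency_commute[OF adj_sym] by simp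
  also have "\<dots> = pair_dependency V E v (anchor s) (anchor t)"
    using pair_dependency_anchor_left[OF assms(2) False assms(6)]
      pair_dependency_commute[OF adj_sym] by simp
  finally show ?thesis .
qed

lemma card_anchor_fibre:
  assumes b: "b \<in> Vge2 V E"
  shows "card {x \<in> V. anchor x = b} = 1 + deg1 V E b"
proof -
  have "{x \<in> V. anchor x = b} = insert b {w \<in> V. E b w \<and> degree V E w = 1}"
  proof safe
    fix x assume x: "x \<in> V" "b = anchor x" "x \<noteq> anchor x"
    then have "x \<in> V1 V E" by (auto simp: anchor_def split: if_splits)
    with x show "E (anchor x) x" "degree V E x = 1"
      using adj_pendant_iff adj_sym by (auto simp: anchor_def V1_def)
  next
    show "b \<in> V" "anchor b = b" using b Vge2_subset anchor_Vge2 by auto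
  next
    fix w assume w: "w \<in> V" "E b w" "degree V E w = 1"
    then show "anchor w = b" using adj_pendant_iff[of w b] adj_sym by (auto simp: anchor_def V1_def)
  qed
  moreover have "finite {w \<in> V. E b w \<and> degree V E w = 1}" using finite_vertices by auto
  ultimately show ?thesis using adj_irrefl by (simp add: deg1_def)
qed

end

subsection \<open>Regrouping the betweenness sum by anchors\<close>

locale pendant_reduction = connected_simple_graph +
  fixes u :: 'a
  assumes three_vertices: "card V \<ge> 3" and u_Vge2: "u \<in> Vge2 V E"
begin

abbreviation dep :: "'a \<Rightarrow> 'a \<Rightarrow> real" where
  "dep \<equiv> pair_dependency V E u"

definition weight :: "'a \<Rightarrow> nat" where
  "weight b = card {x \<in> V - {u}. anchor x = b}"

lemma u_vertex: "u \<in> V"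
  using u_Vge2 Vge2_subset by auto

lemma finite_Vge2: "finite (Vge2 V E)"
  using finite_vertices Vge2_subset finite_subset by blast

lemma weight_Vge2:
  assumes "b \<in> Vge2 V E" "b \<noteq> u"
  shows "weight b = 1 + deg1 V E b"
proof -
  have "{x \<in> V - {u}. anchor x = b} = {x \<in> V. anchor x = b}"
    using assms anchor_Vge2[OF u_Vge2] by auto
  then show ?thesis using card_anchor_fibre[OF assms(1)] by (simp add: weight_def)
qed

lemma weight_u: "weight u = deg1 V E u"
proof -
  have "{x \<in> V. anchor x = u} = insert u {x \<in> V - {u}. anchor x = u}"
    using u_vertex anchor_Vge2[OF u_Vge2] by auto
  then show ?thesis using card_anchor_fibre[OF u_Vge2] finite_vertices by (simp add: weight_def)
qed

lemma sum_by_anchor: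
  "(\<Sum>x\<in>V - {u}. (h (anchor x) :: real)) = (\<Sum>b\<in>Vge2 V E. real (weight b) * h b)"
proof -
  have "(\<Sum>b\<in>Vge2 V E. \<Sum>x | x \<in> V - {u} \<and> anchor x = b. h (anchor x))
      = (\<Sum>x\<in>V - {u}. h (anchor x))"
    by (rule sum.group) (use finite_vertices finite_Vge2 anchor_in_Vge2[OF three_vertices] in auto)
  moreover have "(\<Sum>x | x \<in> V - {u} \<and> anchor x = b. h (anchor x))
      = (\<Sum>x | x \<in> V - {u} \<and> anchor x = b. h b)" for b
    by (rule sum.cong) auto
  ultimately have "(\<Sum>x\<in>V - {u}. h (anchor x))
      = (\<Sum>b\<in>Vge2 V E. \<Sum>x | x \<in> V - {u} \<and> anchor x = b. h b)"
    by simp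
  then show ?thesis by (simp add: weight_def)
qed

lemma sum_weight: "(\<Sum>b\<in>Vge2 V E. real (weight b)) = real (card V) - 1"
  using sum_by_anchor[of "\<lambda>_. 1"] u_vertex finite_vertices three_vertices
  by (simp add: card_Diff_singleton of_nat_diff)

lemma dep_diag: "a \<in> Vge2 V E \<Longrightarrow> dep a a = (if a = u then 1 else 0)"
  using pair_dependency_source[OF finite_vertices walks_between_nonempty[OF u_vertex u_vertex]]
    pair_dependency_loop[of a V u E] Vge2_subset by auto

lemma dep_from_u: "b \<in> V \<Longrightarrow> dep u b = 1"
  using pair_dependency_source[OF finite_vertices walks_between_nonempty[OF u_vertex]] .

lemma dep_to_u: "b \<in> V \<Longrightarrow> dep b u = 1"
  using dep_from_u pair_dependency_commute[OF adj_sym, where s=b and t=u] by simp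

lemma pair_sum_by_anchors:
  "(\<Sum>(s,t) \<in> {(s,t). s \<in> V \<and> t \<in> V \<and> s \<noteq> t \<and> s \<noteq> u \<and> t \<noteq> u}. dep s t)
   = (\<Sum>a\<in>Vge2 V E. real (weight a) *
        ((\<Sum>b\<in>Vge2 V E. real (weight b) * dep a b) - (if a = u then 1 else 0)))"
proof -
  have pairs: "{(s,t). s \<in> V \<and> t \<in> V \<and> s \<noteq> t \<and> s \<noteq> u \<and> t \<noteq> u} = Sigma (V - {u}) (\<lambda>s. V - {u} - {s})"
    by auto
  have "(\<Sum>(s,t) \<in> Sigma (V - {u}) (\<lambda>s. V - {u} - {s}). dep s t)
      = (\<Sum>s\<in>V - {u}. \<Sum>t\<in>V - {u} - {s}. dep s t)"
    by (rule sum.Sigma[symmetric]) (use finite_vertices in auto)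
  also have "\<dots> = (\<Sum>s\<in>V - {u}. \<Sum>t\<in>V - {u} - {s}. dep (anchor s) (anchor t))"
    by (intro sum.cong refl pair_dependency_anchor) (use u_vertex in auto)
  also have "\<dots> = (\<Sum>s\<in>V - {u}. (\<Sum>t\<in>V - {u}. dep (anchor s) (anchor t)) - dep (anchor s) (anchor s))"
    by (intro sum.cong refl, subst sum_diff1) (use finite_vertices in auto)
  also have "\<dots> = (\<Sum>s\<in>V - {u}. (\<Sum>b\<in>Vge2 V E. real (weight b) * dep (anchor s) b)
                                   - (if anchor s = u then 1 else 0))"
    by (intro sum.cong refl, subst sum_by_anchor)
      (use dep_diag anchor_in_Vge2[OF three_vertices] in auto)
  also have "\<dots> = (\<Sum>a\<in>Vge2 V E. real (weight a) *
        ((\<Sum>b\<in>Vge2 V E. real (weight b) * dep a b) - (if a = u then 1 else 0)))"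
    by (rule sum_by_anchor)
  finally show ?thesis unfolding pairs .
qed

lemma row_sum_split:
  assumes a: "a \<in> Vge2 V E" "a \<noteq> u"
  shows "(\<Sum>b\<in>Vge2 V E. real (weight b) * dep a b)
    = real (deg1 V E u) + (\<Sum>b\<in>Vge2 V E - {a, u}. real (weight b) * dep a b)"
proof -
  let ?f = "\<lambda>b. real (weight b) * dep a b"
  have "sum ?f (Vge2 V E) = ?f u + sum ?f (Vge2 V E - {u})"
    by (rule sum.remove[OF finite_Vge2 u_Vge2])
  also have "sum ?f (Vge2 V E - {u}) = ?f a + sum ?f (Vge2 V E - {u} - {a})"
    by (rule sum.remove) (use finite_Vge2 a in auto)
  also have "Vge2 V E - {u} - {a} = Vge2 V E - {a, u}"
    by auto
  finally show ?thesis
    using a dep_diag[OF a(1)] dep_to_u[of a] Vge2_subset weight_u by auto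
qed

lemma pair_sum_decomposition:
  "(\<Sum>a\<in>Vge2 V E. real (weight a) *
      ((\<Sum>b\<in>Vge2 V E. real (weight b) * dep a b) - (if a = u then 1 else 0)))
   = (\<Sum>a\<in>Vge2 V E - {u}. real (weight a) * (\<Sum>b\<in>Vge2 V E - {a, u}. real (weight b) * dep a b))
     + real (deg1 V E u) * (2 * real (card V) - 3 - real (deg1 V E u))"
proof -
  let ?d = "real (deg1 V E u)"
  let ?R = "\<lambda>a. \<Sum>b\<in>Vge2 V E - {a, u}. real (weight b) * dep a b"
  have row_u: "(\<Sum>b\<in>Vge2 V E. real (weight b) * dep u b) = real (card V) - 1"
    using sum_weight dep_from_u Vge2_subset by (simp add: subset_iff)
  have others: "(\<Sum>a\<in>Vge2 V E - {u}. real (weight a)) = real (card V) - 1 - ?d"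
    using sum_weight sum.remove[OF finite_Vge2 u_Vge2, of "\<lambda>a. real (weight a)"] weight_u by simp
  let ?F = "\<lambda>a. real (weight a) * ((\<Sum>b\<in>Vge2 V E. real (weight b) * dep a b) - (if a = u then 1 else 0))"
  have "sum ?F (Vge2 V E) = ?F u + sum ?F (Vge2 V E - {u})"
    by (rule sum.remove[OF finite_Vge2 u_Vge2])
  also have "?F u = ?d * (real (card V) - 2)"
    unfolding row_u weight_u by simp
  also have "sum ?F (Vge2 V E - {u}) = (\<Sum>a\<in>Vge2 V E - {u}. ?d * real (weight a) + real (weight a) * ?R a)"
    by (intro sum.cong refl) (simp add: row_sum_split algebra_simps)
  also have "\<dots> = ?d * (real (card V) - 1 - ?d) + (\<Sum>a\<in>Vge2 V E - {u}. real (weight a) * ?R a)"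
    by (simp add: sum.distrib sum_distrib_left[symmetric] others)
  finally show ?thesis by (simp add: algebra_simps)
qed

lemma row_sum_eq_delta_zeta:
  assumes s: "s \<in> Vge2 V E" "s \<noteq> u"
  shows "real (weight s) * (\<Sum>b\<in>Vge2 V E - {s, u}. real (weight b) * dep s b)
    = (1 + real (deg1 V E s)) * (delta_tilde V E s u + zeta V E s u)"
proof -
  have dep_tilde: "real (sigma_via (Vge2 V E) E s t u) / real (sigma (Vge2 V E) E s t) = dep s t"
    if "t \<in> Vge2 V E" for t
    using shortest_paths_Vge2[OF s(1) that] by (simp add: pair_dependency_def sigma_def sigma_via_def)
  have "delta_tilde V E s u + zeta V E s u = (\<Sum>t\<in>Vge2 V E - {s, u}. real (weight t) * dep s t)"
    unfolding delta_tilde_def zeta_def sum.distrib[symmetric]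
  proof (intro sum.cong refl)
    fix t assume t: "t \<in> Vge2 V E - {s, u}"
    let ?q = "real (sigma_via (Vge2 V E) E s t u) / real (sigma (Vge2 V E) E s t)"
    have "?q + real (deg1 V E t) * real (sigma_via (Vge2 V E) E s t u) / real (sigma (Vge2 V E) E s t)
        = (1 + real (deg1 V E t)) * ?q"
      by (simp add: distrib_right add_divide_distrib)
    also have "\<dots> = real (weight t) * dep s t"
      using t dep_tilde[of t] weight_Vge2[of t] by (simp del: of_nat_Suc)
    finally show "?q + real (deg1 V E t) * real (sigma_via (Vge2 V E) E s t u) / real (sigma (Vge2 V E) E s t)
        = real (weight t) * dep s t" .
  qed
  then show ?thesis using weight_Vge2[OF s] by simp
qed

end

theorem mainTheorem6:
  fixes V :: "'a set" and E :: "'a \<Rightarrow> 'a \<Rightarrow> bool" and u :: 'a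
  assumes "simple_graph V E"
    and "connected_graph V E"
    and "card V \<ge> 3"
    and "u \<in> Vge2 V E"
  shows "real (card V - 1) * real (card V - 2) * betweenness V E u =
    (\<Sum>s \<in> Vge2 V E - {u}. (1 + real (deg1 V E s)) * (delta_tilde V E s u + zeta V E s u))
    + real (deg1 V E u) * (2 * real (card V) - 3 - real (deg1 V E u))"
proof -
  interpret pendant_reduction V E u
    using assms by unfold_locales
  have "real (card V - 1) * real (card V - 2) \<noteq> 0"
    using assms(3) by simp
  then have "real (card V - 1) * real (card V - 2) * betweenness V E u
      = (\<Sum>(s,t) \<in> {(s,t). s \<in> V \<and> t \<in> V \<and> s \<noteq> t \<and> s \<noteq> u \<and> t \<noteq> u}. dep s t)"
    by (simp add: betweenness_def pair_dependency_def)
  also have "\<dots> = (\<Sum>a\<in>Vge2 V E - {u}. real (weight a) * (\<Sum>b\<in>Vge2 V E - {a, u}. real (weight b) * dep a b))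
      + real (deg1 V E u) * (2 * real (card V) - 3 - real (deg1 V E u))"
    by (simp only: pair_sum_by_anchors pair_sum_decomposition)
  also have "(\<Sum>a\<in>Vge2 V E - {u}. real (weight a) * (\<Sum>b\<in>Vge2 V E - {a, u}. real (weight b) * dep a b))
      = (\<Sum>s \<in> Vge2 V E - {u}. (1 + real (deg1 V E s)) * (delta_tilde V E s u + zeta V E s u))"
    by (intro sum.cong refl row_sum_eq_delta_zeta) auto
  finally show ?thesis .
qed

end
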